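(* Let $\Delta$ be an irreducible reduced root system with set of positive roots $\Delta^+$, and let $\eta_1,\eta_2\in\Delta^+$. Partially order $\Delta^+$ by $\mu\preccurlyeq\nu$ iff $\nu-\mu$ is a non-negative integral linear combination of simple roots, and denote by $\eta_1\vee\eta_2$ the least upper bound of $\eta_1,\eta_2$ in $(\Delta^+,\preccurlyeq)$ (which always exists), and by $\eta_1\wedge\eta_2$ their greatest lower bound in $(\Delta^+,\preccurlyeq)$ when it exists. (i) If $\eta_1\vee\eta_2$ covers both $\eta_1$ and $\eta_2$, then either $\eta_1\vee\eta_2=\alpha+\beta=\eta_1+\eta_2$ for some simple roots $\alpha,\beta$ that are adjacent in the Dynkin diagram, or $\eta_1\wedge\eta_2$ exists and $\eta_1$ and $\eta_2$ both cover $\eta_1\wedge\eta_2$. (ii) If $\eta_1\wedge\eta_2$ exists and $\eta_1$ and $\eta_2$ both cover $\eta_1\wedge\eta_2$, then $\eta_1\vee\eta_2$ covers both $\eta_1$ and $\eta_2$.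
   Context: "$x$ covers $y$" means $y\prec x$ and there is no $z$ with $y\prec z\prec x$ in $(\Delta^+,\preccurlyeq)$. The greatest lower bound (meet) $\nu=\eta_1\wedge\eta_2$, if it exists, is a positive root with $\eta_1\succcurlyeq\nu$, $\eta_2\succcurlyeq\nu$, and such that $\eta_1\succcurlyeq\kappa$, $\eta_2\succcurlyeq\kappa$ imply $\nu\succcurlyeq\kappa$ for every $\kappa\in\Delta^+$. *)

theory Defs
  imports "HOL-Analysis.Analysis"
begin

definition root_refl :: "'a::euclidean_space \<Rightarrow> 'a \<Rightarrow> 'a" where
  "root_refl \<alpha> \<beta> = \<beta> - (2 * (\<beta> \<bullet> \<alpha>) / (\<alpha> \<bullet> \<alpha>)) *\<^sub>R \<alpha>"

definition root_system :: "'a::euclidean_space set \<Rightarrow> bool" where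
  "root_system R \<longleftrightarrow> finite R \<and> 0 \<notin> R \<and> span R = UNIV \<and>
     (\<forall>\<alpha>\<in>R. \<forall>\<beta>\<in>R. root_refl \<alpha> \<beta> \<in> R) \<and>
     (\<forall>\<alpha>\<in>R. \<forall>\<beta>\<in>R. 2 * (\<beta> \<bullet> \<alpha>) / (\<alpha> \<bullet> \<alpha>) \<in> \<int>)"

definition reduced_root_system :: "'a::euclidean_space set \<Rightarrow> bool" where
  "reduced_root_system R \<longleftrightarrow> (\<forall>\<alpha>\<in>R. \<forall>c::real. c *\<^sub>R \<alpha> \<in> R \<longrightarrow> c = 1 \<or> c = -1)"

definition irreducible_root_system :: "'a::euclidean_space set \<Rightarrow> bool" where
  "irreducible_root_system R \<longleftrightarrow> R \<noteq> {} \<and>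
     \<not> (\<exists>A B. A \<noteq> {} \<and> B \<noteq> {} \<and> A \<union> B = R \<and> A \<inter> B = {} \<and>
            (\<forall>a\<in>A. \<forall>b\<in>B. a \<bullet> b = 0))"

definition nonneg_int_comb :: "'a::euclidean_space set \<Rightarrow> 'a \<Rightarrow> bool" where
  "nonneg_int_comb S v \<longleftrightarrow> (\<exists>c::'a \<Rightarrow> real. (\<forall>\<alpha>\<in>S. c \<alpha> \<in> \<nat>) \<and> v = (\<Sum>\<alpha>\<in>S. c \<alpha> *\<^sub>R \<alpha>))"

definition root_base :: "'a::euclidean_space set \<Rightarrow> 'a set \<Rightarrow> bool" where
  "root_base R S \<longleftrightarrow> S \<subseteq> R \<and> independent S \<and> span S = span R \<and>
     (\<forall>\<beta>\<in>R. nonneg_int_comb S \<beta> \<or> nonneg_int_comb S (- \<beta>))"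

definition pos_roots :: "'a::euclidean_space set \<Rightarrow> 'a set \<Rightarrow> 'a set" where
  "pos_roots R S = {\<beta>\<in>R. nonneg_int_comb S \<beta>}"

definition root_le :: "'a::euclidean_space set \<Rightarrow> 'a \<Rightarrow> 'a \<Rightarrow> bool" where
  "root_le S \<mu> \<nu> \<longleftrightarrow> nonneg_int_comb S (\<nu> - \<mu>)"

definition root_less :: "'a::euclidean_space set \<Rightarrow> 'a \<Rightarrow> 'a \<Rightarrow> bool" where
  "root_less S \<mu> \<nu> \<longleftrightarrow> root_le S \<mu> \<nu> \<and> \<mu> \<noteq> \<nu>"

definition root_covers :: "'a::euclidean_space set \<Rightarrow> 'a set \<Rightarrow> 'a \<Rightarrow> 'a \<Rightarrow> bool" where
  "root_covers S P x y \<longleftrightarrow> x \<in> P \<and> y \<in> P \<and> root_less S y x \<and>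
     \<not> (\<exists>z\<in>P. root_less S y z \<and> root_less S z x)"

definition is_root_join :: "'a::euclidean_space set \<Rightarrow> 'a set \<Rightarrow> 'a \<Rightarrow> 'a \<Rightarrow> 'a \<Rightarrow> bool" where
  "is_root_join S P a b j \<longleftrightarrow> j \<in> P \<and> root_le S a j \<and> root_le S b j \<and>
     (\<forall>k\<in>P. root_le S a k \<and> root_le S b k \<longrightarrow> root_le S j k)"

definition is_root_meet :: "'a::euclidean_space set \<Rightarrow> 'a set \<Rightarrow> 'a \<Rightarrow> 'a \<Rightarrow> 'a \<Rightarrow> bool" where
  "is_root_meet S P a b m \<longleftrightarrow> m \<in> P \<and> root_le S m a \<and> root_le S m b \<and>
     (\<forall>k\<in>P. root_le S k a \<and> root_le S k b \<longrightarrow> root_le S k m)"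

definition dynkin_adjacent :: "'a::euclidean_space \<Rightarrow> 'a \<Rightarrow> bool" where
  "dynkin_adjacent \<alpha> \<beta> \<longleftrightarrow> \<alpha> \<noteq> \<beta> \<and> \<alpha> \<bullet> \<beta> \<noteq> 0"

end

theory Submission
  imports Defs
begin

text \<open>
  In \<open>(\<Delta>\<^sup>+, \<preccurlyeq>)\<close> one root covers another exactly when they differ by a simple root:
  if \<open>\<nu> - \<mu>\<close> is a non-zero, non-simple element of the cone, some simple \<open>\<alpha>\<close> with
  \<open>\<nu> - \<mu> - \<alpha>\<close> in the cone has \<open>(\<nu> - \<mu>) \<bullet> \<alpha> > 0\<close>, so \<open>\<nu> - \<alpha>\<close> or \<open>\<mu> + \<alpha>\<close> is a
  positive root strictly in between.

  Both parts therefore concern the configuration \<open>\<eta>\<^sub>1 = \<nu> + \<alpha>\<close>, \<open>\<eta>\<^sub>2 = \<nu> + \<beta>\<close>,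
  \<open>j = \<nu> + \<alpha> + \<beta>\<close> with distinct simple roots \<open>\<alpha>, \<beta>\<close>. As \<open>\<eta>\<^sub>1 - \<eta>\<^sub>2 = \<alpha> - \<beta>\<close> is
  not a root, \<open>\<eta>\<^sub>1 \<bullet> \<eta>\<^sub>2 \<le> 0\<close>; with \<open>\<alpha> \<bullet> \<beta> \<le> 0\<close>, expanding \<open>j \<bullet> j > 0\<close> (resp.
  \<open>\<nu> \<bullet> \<nu> > 0\<close>) in terms of \<open>\<eta>\<^sub>1, \<eta>\<^sub>2, \<alpha>, \<beta>\<close> forces \<open>\<eta>\<^sub>1 \<bullet> \<beta>\<close> or \<open>\<eta>\<^sub>2 \<bullet> \<alpha>\<close> to
  have the sign that makes the missing vertex \<open>\<nu>\<close> (resp. \<open>j\<close>) a root. The only exception is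
  \<open>\<nu> = 0\<close>, where \<open>j = \<alpha> + \<beta>\<close> being a root means \<open>\<alpha> \<bullet> \<beta> \<noteq> 0\<close>. Comparing coordinates in the
  basis of simple roots shows that \<open>\<nu>\<close> is then the meet and \<open>\<nu> + \<alpha> + \<beta>\<close> the join.
\<close>

lemma Nats_le_one_cases: "(x::real) \<in> \<nat> \<Longrightarrow> 1 - x \<in> \<nat> \<Longrightarrow> x = 0 \<or> x = 1"
  by (elim Nats_cases) (auto simp: Nats_altdef2)

locale nonneg_int_cone =
  fixes S :: "'a::euclidean_space set"
  assumes finite_S: "finite S" and independent_S: "independent S"
begin

lemmas coord_simps =
  representation_add[OF independent_S] representation_diff[OF independent_S]
  representation_neg[OF independent_S] representation_basis[OF independent_S]

lemma sum_coord_eq: "v \<in> span S \<Longrightarrow> (\<Sum>\<gamma>\<in>S. representation S v \<gamma> *\<^sub>R \<gamma>) = v"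
  using sum_representation_eq[OF independent_S _ finite_S] by blast

lemma eq_if_coord_eq:
  assumes "x \<in> span S" "y \<in> span S" "\<And>\<gamma>. \<gamma> \<in> S \<Longrightarrow> representation S x \<gamma> = representation S y \<gamma>"
  shows "x = y"
  using sum_coord_eq[OF assms(1)] sum_coord_eq[OF assms(2)] assms(3) by (metis (no_types, lifting) sum.cong)

lemma nonneg_int_comb_iff_coord:
  "nonneg_int_comb S v \<longleftrightarrow> v \<in> span S \<and> (\<forall>\<gamma>\<in>S. representation S v \<gamma> \<in> \<nat>)"
proof
  assume "nonneg_int_comb S v"
  then obtain c where c: "\<forall>\<alpha>\<in>S. c \<alpha> \<in> \<nat>" and v: "v = (\<Sum>\<alpha>\<in>S. c \<alpha> *\<^sub>R \<alpha>)"
    unfolding nonneg_int_comb_def by blast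
  have span: "v \<in> span S"
    unfolding v by (intro span_sum span_scale span_base)
  have "representation S v \<gamma> = c \<gamma>" if "\<gamma> \<in> S" for \<gamma>
  proof -
    have "representation S v \<gamma> = (\<Sum>\<alpha>\<in>S. representation S (c \<alpha> *\<^sub>R \<alpha>) \<gamma>)"
      unfolding v by (subst representation_sum[OF independent_S]) (auto intro: span_scale span_base)
    also have "\<dots> = (\<Sum>\<alpha>\<in>S. c \<alpha> * (if \<gamma> = \<alpha> then 1 else 0))"
      by (intro sum.cong) (simp_all add: representation_scale[OF independent_S] coord_simps span_base)
    also have "\<dots> = c \<gamma>"
      using that finite_S by (simp add: if_distrib cong: if_cong)
    finally show ?thesis .
  qed
  with c span show "v \<in> span S \<and> (\<forall>\<gamma>\<in>S. representation S v \<gamma> \<in> \<nat>)" by simp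
next
  assume "v \<in> span S \<and> (\<forall>\<gamma>\<in>S. representation S v \<gamma> \<in> \<nat>)"
  then show "nonneg_int_comb S v"
    unfolding nonneg_int_comb_def using sum_coord_eq by metis
qed

lemma nonneg_int_comb_span: "nonneg_int_comb S v \<Longrightarrow> v \<in> span S"
  by (simp add: nonneg_int_comb_iff_coord)

lemma nonneg_int_comb_zero: "nonneg_int_comb S 0"
  by (simp add: nonneg_int_comb_iff_coord representation_zero span_zero)

lemma nonneg_int_comb_simple: "\<alpha> \<in> S \<Longrightarrow> nonneg_int_comb S \<alpha>"
  by (simp add: nonneg_int_comb_iff_coord coord_simps span_base)

lemma nonneg_int_comb_add:
  "nonneg_int_comb S x \<Longrightarrow> nonneg_int_comb S y \<Longrightarrow> nonneg_int_comb S (x + y)"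
  by (simp add: nonneg_int_comb_iff_coord coord_simps span_add Nats_add)

lemma nonneg_int_comb_antisym:
  assumes "nonneg_int_comb S x" "nonneg_int_comb S (- x)"
  shows "x = 0"
proof (rule eq_if_coord_eq)
  show "x \<in> span S" "0 \<in> span S"
    using assms(1) by (simp_all add: nonneg_int_comb_span span_zero)
  fix \<gamma> assume "\<gamma> \<in> S"
  with assms have "representation S x \<gamma> \<in> \<nat>" "- representation S x \<gamma> \<in> \<nat>"
    by (simp_all add: nonneg_int_comb_iff_coord coord_simps)
  then show "representation S x \<gamma> = representation S 0 \<gamma>"
    by (simp add: representation_zero Nats_altdef2)
qed

lemma nonneg_int_comb_below_simple:
  assumes \<alpha>: "\<alpha> \<in> S" and x: "nonneg_int_comb S x" and "nonneg_int_comb S (\<alpha> - x)"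
  shows "x = 0 \<or> x = \<alpha>"
proof -
  have span: "x \<in> span S"
    using x by (rule nonneg_int_comb_span)
  have coord: "representation S x \<gamma> \<in> \<nat>" "(if \<gamma> = \<alpha> then 1 else 0) - representation S x \<gamma> \<in> \<nat>"
    if "\<gamma> \<in> S" for \<gamma>
    using assms that by (auto simp: nonneg_int_comb_iff_coord coord_simps span_base)
  have off: "representation S x \<gamma> = 0" if "\<gamma> \<in> S" "\<gamma> \<noteq> \<alpha>" for \<gamma>
    using coord[OF that(1)] that(2) by (auto simp: Nats_altdef2)
  have "1 - representation S x \<alpha> \<in> \<nat>"
    using coord(2)[OF \<alpha>] by simp
  from Nats_le_one_cases[OF coord(1)[OF \<alpha>] this] show ?thesis
  proof
    assume "representation S x \<alpha> = 0"
    then have "x = 0"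
      using off span by (intro eq_if_coord_eq) (auto simp: representation_zero span_zero)
    then show ?thesis ..
  next
    assume "representation S x \<alpha> = 1"
    then have "x = \<alpha>"
      using off span \<alpha> by (intro eq_if_coord_eq) (auto simp: coord_simps span_base)
    then show ?thesis ..
  qed
qed

lemma not_nonneg_int_comb_simple_diff:
  assumes "\<alpha> \<in> S" "\<beta> \<in> S" "\<alpha> \<noteq> \<beta>"
  shows "\<not> nonneg_int_comb S (\<beta> - \<alpha>)"
proof
  assume "nonneg_int_comb S (\<beta> - \<alpha>)"
  then have "representation S (\<beta> - \<alpha>) \<alpha> \<in> \<nat>"
    using assms(1) by (simp add: nonneg_int_comb_iff_coord)
  then show False
    using assms by (simp add: coord_simps span_base Nats_altdef2)
qed

lemma nonneg_int_comb_of_add_simples: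
  assumes "\<alpha> \<in> S" "\<beta> \<in> S" "\<alpha> \<noteq> \<beta>"
    and "nonneg_int_comb S (v + \<alpha>)" "nonneg_int_comb S (v + \<beta>)"
  shows "nonneg_int_comb S v"
proof -
  have span: "v \<in> span S"
    using nonneg_int_comb_span[OF assms(4)] span_base[OF assms(1)]
    by (metis add_diff_cancel_right' span_diff)
  have "representation S v \<gamma> \<in> \<nat>" if "\<gamma> \<in> S" for \<gamma>
    using assms(1-3) assms(4,5)[unfolded nonneg_int_comb_iff_coord] that span
    by (cases "\<gamma> = \<alpha>") (auto simp: coord_simps span_base)
  with span show ?thesis
    by (simp add: nonneg_int_comb_iff_coord)
qed

lemma nonneg_int_comb_simple_step:
  assumes v: "nonneg_int_comb S v" and "v \<noteq> 0"
  obtains \<alpha> where "\<alpha> \<in> S" "nonneg_int_comb S (v - \<alpha>)" "v \<bullet> \<alpha> > 0"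
proof -
  have span: "v \<in> span S" and coord: "\<forall>\<gamma>\<in>S. representation S v \<gamma> \<in> \<nat>"
    using v by (simp_all add: nonneg_int_comb_iff_coord)
  have "\<exists>\<alpha>\<in>S. representation S v \<alpha> \<noteq> 0 \<and> v \<bullet> \<alpha> > 0"
  proof (rule ccontr)
    assume none: "\<not> ?thesis"
    have "v \<bullet> v = (\<Sum>\<gamma>\<in>S. representation S v \<gamma> * (v \<bullet> \<gamma>))"
      by (subst (2) sum_coord_eq[OF span, symmetric]) (simp add: inner_sum_right)
    also have "\<dots> \<le> 0"
      using none coord by (intro sum_nonpos) (auto simp: Nats_altdef2 mult_nonneg_nonpos)
    finally show False
      using \<open>v \<noteq> 0\<close> inner_gt_zero_iff[of v] by linarith
  qed
  then obtain \<alpha> where \<alpha>: "\<alpha> \<in> S" "representation S v \<alpha> \<noteq> 0" "v \<bullet> \<alpha> > 0"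
    by blast
  have "representation S v \<alpha> - 1 \<in> \<nat>"
    using coord \<alpha> by (auto elim!: Nats_cases simp: of_nat_diff[symmetric] simp del: of_nat_diff)
  then have "nonneg_int_comb S (v - \<alpha>)"
    using coord span \<alpha>(1) by (auto simp: nonneg_int_comb_iff_coord coord_simps span_base span_diff)
  with \<alpha> that show ?thesis by blast
qed

lemma nonneg_int_comb_diff_simples:
  assumes "\<alpha> \<in> S" "\<beta> \<in> S" "\<alpha> \<noteq> \<beta>"
    and "nonneg_int_comb S (v - \<alpha>)" "nonneg_int_comb S (v - \<beta>)"
  shows "nonneg_int_comb S (v - \<alpha> - \<beta>)"
proof -
  have span: "v \<in> span S"
    using nonneg_int_comb_span[OF assms(4)] span_base[OF assms(1)]
    by (metis diff_add_cancel span_add)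
  have "representation S (v - \<alpha> - \<beta>) \<gamma> \<in> \<nat>" if "\<gamma> \<in> S" for \<gamma>
    using assms(1-3) assms(4,5)[unfolded nonneg_int_comb_iff_coord] that span
    by (cases "\<gamma> = \<alpha>") (auto simp: coord_simps span_base span_diff)
  with span assms(1,2) show ?thesis
    by (simp add: nonneg_int_comb_iff_coord span_base span_diff)
qed

end

lemma root_refl_self: "\<alpha> \<noteq> 0 \<Longrightarrow> root_refl \<alpha> \<alpha> = - \<alpha>"
  by (simp add: root_refl_def scaleR_2)

lemma root_system_uminus_mem:
  assumes "root_system R" "\<alpha> \<in> R"
  shows "- \<alpha> \<in> R"
  using assms root_refl_self[of \<alpha>] unfolding root_system_def by metis

lemma root_system_diff_mem:
  assumes R: "root_system R" and \<alpha>: "\<alpha> \<in> R" and \<beta>: "\<beta> \<in> R"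
    and pos: "\<alpha> \<bullet> \<beta> > 0" and "\<alpha> \<noteq> \<beta>"
  shows "\<alpha> - \<beta> \<in> R"
proof -
  define a b where "a = 2 * (\<alpha> \<bullet> \<beta>) / (\<beta> \<bullet> \<beta>)" and "b = 2 * (\<alpha> \<bullet> \<beta>) / (\<alpha> \<bullet> \<alpha>)"
  have norms: "\<alpha> \<bullet> \<alpha> > 0" "\<beta> \<bullet> \<beta> > 0"
    using R \<alpha> \<beta> unfolding root_system_def by auto
  have "a \<in> \<int>" "b \<in> \<int>"
    using R \<alpha> \<beta> unfolding root_system_def a_def b_def by (auto simp: inner_commute)
  moreover have "a > 0" "b > 0"
    using pos norms by (simp_all add: a_def b_def)
  ultimately consider "a = 1" | "b = 1" | "a \<ge> 2 \<and> b \<ge> 2"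
    by (force elim!: Ints_cases)
  then show ?thesis
  proof cases
    case 1
    then have "root_refl \<beta> \<alpha> = \<alpha> - \<beta>"
      using norms by (simp add: root_refl_def a_def)
    then show ?thesis
      using R \<alpha> \<beta> unfolding root_system_def by metis
  next
    case 2
    then have "root_refl \<alpha> \<beta> = - (\<alpha> - \<beta>)"
      using norms by (simp add: root_refl_def b_def inner_commute)
    then show ?thesis
      using R \<alpha> \<beta> root_system_uminus_mem[OF R] unfolding root_system_def
      by (metis minus_minus)
  next
    case 3
    \<comment> \<open>both Cartan integers \<open>\<ge> 2\<close> force \<open>|\<alpha> - \<beta>|\<^sup>2 \<le> 0\<close>\<close>
    then have "(\<alpha> - \<beta>) \<bullet> (\<alpha> - \<beta>) \<le> 0"
      using norms by (simp add: a_def b_def field_simps inner_diff_left inner_diff_right inner_commute)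
    with \<open>\<alpha> \<noteq> \<beta>\<close> show ?thesis
      by (metis inner_gt_zero_iff not_le right_minus_eq)
  qed
qed

lemma root_system_add_mem:
  assumes "root_system R" "\<alpha> \<in> R" "\<beta> \<in> R" "\<alpha> \<bullet> \<beta> < 0" "\<alpha> \<noteq> - \<beta>"
  shows "\<alpha> + \<beta> \<in> R"
  using root_system_diff_mem[OF assms(1,2) root_system_uminus_mem[OF assms(1,3)]] assms(4,5)
  by simp

locale based_root_system =
  fixes R S :: "'a::euclidean_space set"
  assumes root_system: "root_system R" and root_base: "root_base R S"
begin

abbreviation P :: "'a set" where "P \<equiv> pos_roots R S"

lemma simple_subset_roots: "S \<subseteq> R"
  using root_base by (simp add: root_base_def)

lemma zero_not_root: "0 \<notin> R"
  using root_system by (simp add: root_system_def)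

sublocale nonneg_int_cone S
proof
  show "finite S"
    using root_system simple_subset_roots finite_subset by (auto simp: root_system_def)
  show "independent S"
    using root_base by (simp add: root_base_def)
qed

lemma pos_roots_iff: "x \<in> P \<longleftrightarrow> x \<in> R \<and> nonneg_int_comb S x"
  by (simp add: pos_roots_def)

lemma root_pos_or_neg: "x \<in> R \<Longrightarrow> nonneg_int_comb S x \<or> nonneg_int_comb S (- x)"
  using root_base by (simp add: root_base_def)

lemma simple_mem_pos_roots: "\<alpha> \<in> S \<Longrightarrow> \<alpha> \<in> P"
  using simple_subset_roots by (auto simp: pos_roots_iff nonneg_int_comb_simple)

lemma pos_root_not_neg: "x \<in> P \<Longrightarrow> \<not> nonneg_int_comb S (- x)"
  using nonneg_int_comb_antisym zero_not_root by (auto simp: pos_roots_iff)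

lemma simple_diff_not_root:
  assumes "\<alpha> \<in> S" "\<beta> \<in> S" "\<alpha> \<noteq> \<beta>"
  shows "\<alpha> - \<beta> \<notin> R"
  using root_pos_or_neg[of "\<alpha> - \<beta>"] not_nonneg_int_comb_simple_diff[OF assms]
    not_nonneg_int_comb_simple_diff[OF assms(2,1)] assms(3) by auto

lemma simple_inner_nonpos:
  assumes "\<alpha> \<in> S" "\<beta> \<in> S" "\<alpha> \<noteq> \<beta>"
  shows "\<alpha> \<bullet> \<beta> \<le> 0"
  using root_system_diff_mem[OF root_system] simple_diff_not_root[OF assms] assms simple_subset_roots
  by (meson not_le subsetD)

lemma roots_inner_nonpos_if_diff_eq_simple_diff:
  assumes "x \<in> R" "y \<in> R" "\<alpha> \<in> S" "\<beta> \<in> S" "\<alpha> \<noteq> \<beta>" "x - y = \<alpha> - \<beta>"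
  shows "x \<bullet> y \<le> 0"
  using root_system_diff_mem[OF root_system assms(1,2)] simple_diff_not_root[OF assms(3-5)] assms(5,6)
  by (metis diff_self eq_iff_diff_eq_0 not_le)

lemma pos_root_add_simple:
  assumes \<mu>: "\<mu> \<in> P" and \<alpha>: "\<alpha> \<in> S" and "\<mu> \<bullet> \<alpha> < 0"
  shows "\<mu> + \<alpha> \<in> P"
proof -
  have "\<mu> \<noteq> - \<alpha>"
    using pos_root_not_neg[OF simple_mem_pos_roots[OF \<alpha>]] \<mu> by (auto simp: pos_roots_iff)
  then have "\<mu> + \<alpha> \<in> R"
    using root_system_add_mem[OF root_system _ _ \<open>\<mu> \<bullet> \<alpha> < 0\<close>] \<mu> \<alpha> simple_subset_roots
    by (auto simp: pos_roots_iff)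
  then show ?thesis
    using \<mu> nonneg_int_comb_add nonneg_int_comb_simple[OF \<alpha>] by (auto simp: pos_roots_iff)
qed

lemma pos_root_diff_simple:
  assumes \<nu>: "\<nu> \<in> P" and \<alpha>: "\<alpha> \<in> S" and "\<nu> \<bullet> \<alpha> > 0" "\<nu> \<noteq> \<alpha>"
  shows "\<nu> - \<alpha> \<in> P"
proof -
  have root: "\<nu> - \<alpha> \<in> R"
    using root_system_diff_mem[OF root_system _ _ \<open>\<nu> \<bullet> \<alpha> > 0\<close> \<open>\<nu> \<noteq> \<alpha>\<close>] \<nu> \<alpha> simple_subset_roots
    by (auto simp: pos_roots_iff)
  have "\<not> nonneg_int_comb S (\<alpha> - \<nu>)"
    using nonneg_int_comb_below_simple[OF \<alpha>, of \<nu>] \<nu> \<open>\<nu> \<noteq> \<alpha>\<close> zero_not_root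
    by (auto simp: pos_roots_iff)
  then show ?thesis
    using root root_pos_or_neg[OF root] by (simp add: pos_roots_iff)
qed

lemma exists_pos_root_between:
  assumes \<mu>: "\<mu> \<in> P" and \<nu>: "\<nu> \<in> P" and "root_less S \<mu> \<nu>" and "\<nu> - \<mu> \<notin> S"
  shows "\<exists>z\<in>P. root_less S \<mu> z \<and> root_less S z \<nu>"
proof -
  have "nonneg_int_comb S (\<nu> - \<mu>)" "\<nu> - \<mu> \<noteq> 0"
    using assms(3) by (auto simp: root_less_def root_le_def)
  then obtain \<alpha> where \<alpha>: "\<alpha> \<in> S" "nonneg_int_comb S (\<nu> - \<mu> - \<alpha>)" "(\<nu> - \<mu>) \<bullet> \<alpha> > 0"
    by (rule nonneg_int_comb_simple_step)
  have gap: "\<nu> - \<mu> - \<alpha> \<noteq> 0" "\<alpha> \<noteq> 0"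
    using \<alpha>(1) \<open>\<nu> - \<mu> \<notin> S\<close> simple_subset_roots zero_not_root by auto
  have "\<nu> \<bullet> \<alpha> > 0 \<or> \<mu> \<bullet> \<alpha> < 0"
    using \<alpha>(3) unfolding inner_diff_left by linarith
  then show ?thesis
  proof
    assume "\<nu> \<bullet> \<alpha> > 0"
    have "\<nu> \<noteq> \<alpha>"
    proof
      assume "\<nu> = \<alpha>"
      then have "\<mu> = 0 \<or> \<mu> = \<alpha>"
        using nonneg_int_comb_below_simple[OF \<alpha>(1)] \<mu> assms(3)
        by (auto simp: pos_roots_iff root_less_def root_le_def)
      then show False
        using \<mu> zero_not_root assms(3) \<open>\<nu> = \<alpha>\<close> by (auto simp: pos_roots_iff root_less_def)
    qed
    then have "\<nu> - \<alpha> \<in> P"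
      using pos_root_diff_simple[OF \<nu> \<alpha>(1) \<open>\<nu> \<bullet> \<alpha> > 0\<close>] by blast
    moreover have "root_less S \<mu> (\<nu> - \<alpha>)" "root_less S (\<nu> - \<alpha>) \<nu>"
      using \<alpha> gap by (auto simp: root_less_def root_le_def nonneg_int_comb_simple algebra_simps)
    ultimately show ?thesis by blast
  next
    assume "\<mu> \<bullet> \<alpha> < 0"
    then have "\<mu> + \<alpha> \<in> P"
      by (rule pos_root_add_simple[OF \<mu> \<alpha>(1)])
    moreover have "root_less S \<mu> (\<mu> + \<alpha>)" "root_less S (\<mu> + \<alpha>) \<nu>"
      using \<alpha> gap by (auto simp: root_less_def root_le_def nonneg_int_comb_simple algebra_simps)
    ultimately show ?thesis by blast
  qed
qed

lemma root_covers_iff: "root_covers S P \<nu> \<mu> \<longleftrightarrow> \<mu> \<in> P \<and> \<nu> \<in> P \<and> \<nu> - \<mu> \<in> S"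
proof
  assume "root_covers S P \<nu> \<mu>"
  then show "\<mu> \<in> P \<and> \<nu> \<in> P \<and> \<nu> - \<mu> \<in> S"
    using exists_pos_root_between unfolding root_covers_def by blast
next
  assume cover: "\<mu> \<in> P \<and> \<nu> \<in> P \<and> \<nu> - \<mu> \<in> S"
  have "\<not> root_less S \<mu> z \<or> \<not> root_less S z \<nu>" for z
    using nonneg_int_comb_below_simple[of "\<nu> - \<mu>" "z - \<mu>"] cover
    by (auto simp: root_less_def root_le_def)
  moreover have "\<nu> \<noteq> \<mu>"
    using cover simple_subset_roots zero_not_root by auto
  ultimately show "root_covers S P \<nu> \<mu>"
    using cover nonneg_int_comb_simple by (auto simp: root_covers_def root_less_def root_le_def)
qed


lemma is_root_meet_simple_sums:
  assumes "\<nu> \<in> P" "\<alpha> \<in> S" "\<beta> \<in> S" "\<alpha> \<noteq> \<beta>"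
  shows "is_root_meet S P (\<nu> + \<alpha>) (\<nu> + \<beta>) \<nu>"
  unfolding is_root_meet_def root_le_def
  using assms nonneg_int_comb_simple nonneg_int_comb_of_add_simples[OF assms(2-4), of "\<nu> - _"]
  by (auto simp: algebra_simps)

lemma is_root_join_simple_sums:
  assumes "\<nu> + \<alpha> + \<beta> \<in> P" "\<alpha> \<in> S" "\<beta> \<in> S" "\<alpha> \<noteq> \<beta>"
  shows "is_root_join S P (\<nu> + \<alpha>) (\<nu> + \<beta>) (\<nu> + \<alpha> + \<beta>)"
  unfolding is_root_join_def root_le_def
  using assms nonneg_int_comb_simple nonneg_int_comb_diff_simples[OF assms(2-4), of "_ - \<nu>"]
  by (auto simp: algebra_simps)

lemma is_root_join_unique:
  assumes "is_root_join S P a b j" "is_root_join S P a b j'"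
  shows "j = j'"
  using assms nonneg_int_comb_antisym[of "j' - j"] by (simp add: is_root_join_def root_le_def)

lemma join_covering_cases:
  assumes join: "is_root_join S P \<eta>1 \<eta>2 j"
    and cover1: "root_covers S P j \<eta>1" and cover2: "root_covers S P j \<eta>2"
  shows "(\<exists>\<alpha>\<in>S. \<exists>\<beta>\<in>S. dynkin_adjacent \<alpha> \<beta> \<and> j = \<alpha> + \<beta> \<and> j = \<eta>1 + \<eta>2) \<or>
    (\<exists>\<nu>. is_root_meet S P \<eta>1 \<eta>2 \<nu> \<and> root_covers S P \<eta>1 \<nu> \<and> root_covers S P \<eta>2 \<nu>)"
proof -
  define \<alpha> \<beta> where "\<alpha> = j - \<eta>1" and "\<beta> = j - \<eta>2"
  have \<alpha>: "\<alpha> \<in> S" and \<beta>: "\<beta> \<in> S" and \<eta>: "\<eta>1 \<in> P" "\<eta>2 \<in> P" and "j \<in> P"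
    using cover1 cover2 by (simp_all add: root_covers_iff \<alpha>_def \<beta>_def)
  have "\<alpha> \<noteq> \<beta>"
  proof
    assume "\<alpha> = \<beta>"
    then have "nonneg_int_comb S (- \<alpha>)"
      using join \<eta>(1) nonneg_int_comb_zero by (auto simp: \<alpha>_def \<beta>_def is_root_join_def root_le_def)
    then show False
      using pos_root_not_neg simple_mem_pos_roots \<alpha> by blast
  qed
  show ?thesis
  proof (cases "\<eta>1 = \<beta>")
    case True
    then have j: "j = \<alpha> + \<beta>" "j = \<eta>1 + \<eta>2"
      by (simp_all add: \<alpha>_def \<beta>_def)
    have "\<alpha> \<bullet> \<beta> \<noteq> 0"
    proof
      assume "\<alpha> \<bullet> \<beta> = 0"
      moreover have "\<alpha> \<noteq> 0"
        using \<alpha> simple_subset_roots zero_not_root by blast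
      ultimately have "root_refl \<alpha> j = \<beta> - \<alpha>"
        by (simp add: j(1) root_refl_def inner_add_left inner_commute[of \<beta> \<alpha>] scaleR_2)
      then have "\<beta> - \<alpha> \<in> R"
        using root_system \<alpha> \<open>j \<in> P\<close> simple_subset_roots
        by (metis pos_roots_iff root_system_def subsetD)
      then show False
        using simple_diff_not_root[OF \<beta> \<alpha>] \<open>\<alpha> \<noteq> \<beta>\<close> by blast
    qed
    then show ?thesis
      using \<alpha> \<beta> j \<open>\<alpha> \<noteq> \<beta>\<close> by (auto simp: dynkin_adjacent_def)
  next
    case False
    define \<nu> where "\<nu> = j - \<alpha> - \<beta>"
    have \<eta>_eq: "\<eta>1 = \<nu> + \<beta>" "\<eta>2 = \<nu> + \<alpha>"
      by (simp_all add: \<nu>_def \<alpha>_def \<beta>_def)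
    have "\<eta>1 \<bullet> \<eta>2 \<le> 0"
      using \<eta> \<alpha> \<beta> \<open>\<alpha> \<noteq> \<beta>\<close>
      by (intro roots_inner_nonpos_if_diff_eq_simple_diff[of _ _ \<beta> \<alpha>])
        (auto simp: pos_roots_iff \<alpha>_def \<beta>_def)
    moreover have "\<alpha> \<bullet> \<beta> \<le> 0"
      using simple_inner_nonpos \<alpha> \<beta> \<open>\<alpha> \<noteq> \<beta>\<close> by blast
    moreover have "j \<bullet> j > 0"
      using \<open>j \<in> P\<close> zero_not_root by (auto simp: pos_roots_iff)
    moreover have "j \<bullet> j = \<eta>1 \<bullet> \<eta>2 + \<eta>1 \<bullet> \<beta> + \<eta>2 \<bullet> \<alpha> + \<alpha> \<bullet> \<beta>"
      using \<eta>_eq by (simp add: \<nu>_def inner_diff_left inner_diff_right inner_commute)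
    ultimately have "\<eta>1 \<bullet> \<beta> > 0 \<or> \<eta>2 \<bullet> \<alpha> > 0"
      by linarith
    then have "\<nu> \<in> P"
      using pos_root_diff_simple[OF \<eta>(1) \<beta>] pos_root_diff_simple[OF \<eta>(2) \<alpha>] False
      by (auto simp: \<eta>_eq)
    then have "is_root_meet S P \<eta>1 \<eta>2 \<nu>"
      using is_root_meet_simple_sums[OF _ \<beta> \<alpha>] \<open>\<alpha> \<noteq> \<beta>\<close> by (simp add: \<eta>_eq)
    moreover have "root_covers S P \<eta>1 \<nu>" "root_covers S P \<eta>2 \<nu>"
      using \<open>\<nu> \<in> P\<close> \<eta> \<alpha> \<beta> by (simp_all add: root_covers_iff \<eta>_eq)
    ultimately show ?thesis
      by blast
  qed
qed

lemma join_covers_if_meet_covered: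
  assumes join: "is_root_join S P \<eta>1 \<eta>2 j" and meet: "is_root_meet S P \<eta>1 \<eta>2 \<nu>"
    and cover1: "root_covers S P \<eta>1 \<nu>" and cover2: "root_covers S P \<eta>2 \<nu>"
  shows "root_covers S P j \<eta>1 \<and> root_covers S P j \<eta>2"
proof -
  define \<alpha> \<beta> where "\<alpha> = \<eta>1 - \<nu>" and "\<beta> = \<eta>2 - \<nu>"
  have \<alpha>: "\<alpha> \<in> S" and \<beta>: "\<beta> \<in> S" and \<eta>: "\<eta>1 \<in> P" "\<eta>2 \<in> P" and "\<nu> \<in> P"
    using cover1 cover2 by (simp_all add: root_covers_iff \<alpha>_def \<beta>_def)
  have \<eta>_eq: "\<eta>1 = \<nu> + \<alpha>" "\<eta>2 = \<nu> + \<beta>"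
    by (simp_all add: \<alpha>_def \<beta>_def)
  have "\<alpha> \<noteq> \<beta>"
  proof
    assume "\<alpha> = \<beta>"
    then have "nonneg_int_comb S (- \<alpha>)"
      using meet \<eta>(1) nonneg_int_comb_zero by (auto simp: \<alpha>_def \<beta>_def is_root_meet_def root_le_def)
    then show False
      using pos_root_not_neg simple_mem_pos_roots \<alpha> by blast
  qed
  have "\<eta>1 \<bullet> \<eta>2 \<le> 0"
    using \<eta> \<alpha> \<beta> \<open>\<alpha> \<noteq> \<beta>\<close>
    by (intro roots_inner_nonpos_if_diff_eq_simple_diff[of _ _ \<alpha> \<beta>])
      (auto simp: pos_roots_iff \<alpha>_def \<beta>_def)
  moreover have "\<alpha> \<bullet> \<beta> \<le> 0"
    using simple_inner_nonpos \<alpha> \<beta> \<open>\<alpha> \<noteq> \<beta>\<close> by blast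
  moreover have "\<nu> \<bullet> \<nu> > 0"
    using \<open>\<nu> \<in> P\<close> zero_not_root by (auto simp: pos_roots_iff)
  moreover have "\<nu> \<bullet> \<nu> = \<eta>1 \<bullet> \<eta>2 - \<eta>1 \<bullet> \<beta> - \<eta>2 \<bullet> \<alpha> + \<alpha> \<bullet> \<beta>"
    by (simp add: \<eta>_eq inner_add_left inner_add_right inner_commute)
  ultimately have "\<eta>1 \<bullet> \<beta> < 0 \<or> \<eta>2 \<bullet> \<alpha> < 0"
    by linarith
  then have "\<nu> + \<alpha> + \<beta> \<in> P"
    using pos_root_add_simple[OF \<eta>(1) \<beta>] pos_root_add_simple[OF \<eta>(2) \<alpha>]
    by (auto simp: \<eta>_eq algebra_simps)
  then have "j = \<nu> + \<alpha> + \<beta>"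
    using is_root_join_unique[OF join] is_root_join_simple_sums \<alpha> \<beta> \<open>\<alpha> \<noteq> \<beta>\<close>
    by (simp add: \<eta>_eq)
  then show ?thesis
    using \<open>\<nu> + \<alpha> + \<beta> \<in> P\<close> \<eta> \<alpha> \<beta> by (simp add: root_covers_iff \<eta>_eq algebra_simps)
qed

end

theorem proposition2p4:
  fixes R S :: "'a::euclidean_space set" and \<eta>1 \<eta>2 j :: 'a
  assumes "root_system R" and "reduced_root_system R" and "irreducible_root_system R"
    and "root_base R S"
    and "\<eta>1 \<in> pos_roots R S" and "\<eta>2 \<in> pos_roots R S"
    and "is_root_join S (pos_roots R S) \<eta>1 \<eta>2 j"
  shows "(root_covers S (pos_roots R S) j \<eta>1 \<and> root_covers S (pos_roots R S) j \<eta>2 \<longrightarrow>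
           (\<exists>\<alpha>\<in>S. \<exists>\<beta>\<in>S. dynkin_adjacent \<alpha> \<beta> \<and> j = \<alpha> + \<beta> \<and> j = \<eta>1 + \<eta>2) \<or>
           (\<exists>\<nu>. is_root_meet S (pos_roots R S) \<eta>1 \<eta>2 \<nu> \<and>
                 root_covers S (pos_roots R S) \<eta>1 \<nu> \<and> root_covers S (pos_roots R S) \<eta>2 \<nu>))
       \<and> ((\<exists>\<nu>. is_root_meet S (pos_roots R S) \<eta>1 \<eta>2 \<nu> \<and>
                 root_covers S (pos_roots R S) \<eta>1 \<nu> \<and> root_covers S (pos_roots R S) \<eta>2 \<nu>) \<longrightarrow>
           root_covers S (pos_roots R S) j \<eta>1 \<and> root_covers S (pos_roots R S) j \<eta>2)"
proof -
  interpret based_root_system R S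
    using assms(1,4) by unfold_locales
  show ?thesis
    using join_covering_cases[OF assms(7)] join_covers_if_meet_covered[OF assms(7)] by blast
qed

end
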